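(* Let $K$ be an alphabet space and $\sigma:K\to K^+$ a generalized substitution on $K$. Then the induced map $\sigma:K^{\mathbb Z}\to K^{\mathbb Z}$ is continuous.
   Context: An alphabet space is a compact zero-dimensional metric space $K$ with at least two points; $K^+$ is the set of nonempty finite words over $K$, and $K^{\mathbb Z}$ carries the product topology. A generalized substitution is a map $\sigma:K\to K^+$ such that $a\mapsto|\sigma(a)|$ is continuous and, for each $j$, $a\mapsto$ ($j$-th letter of $\sigma(a)$) is continuous on $\{a:|\sigma(a)|\ge j\}$. Its extension to $K^{\mathbb Z}$ is $\sigma(\ldots x_{-2}x_{-1}.x_0x_1\ldots)=\ldots\sigma(x_{-2})\sigma(x_{-1}).\sigma(x_0)\sigma(x_1)\ldots$, with $\sigma(x_0)$ starting at coordinate $0$. *)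

theory Defs
  imports "HOL-Analysis.Analysis"
begin

definition zero_dimensional :: "'a::metric_space set \<Rightarrow> bool" where
  "zero_dimensional K \<longleftrightarrow>
     (\<forall>x\<in>K. \<forall>U. open U \<and> x \<in> U \<longrightarrow>
        (\<exists>C. openin (top_of_set K) C \<and> closedin (top_of_set K) C \<and> x \<in> C \<and> C \<subseteq> U \<inter> K))"

definition alphabet_space :: "'a::metric_space set \<Rightarrow> bool" where
  "alphabet_space K \<longleftrightarrow> compact K \<and> zero_dimensional K \<and> (\<exists>a\<in>K. \<exists>b\<in>K. a \<noteq> b)"

text \<open>Generalized substitution sigma : K -> K^+ (nonempty finite words over K), with
  continuous length map and continuous j-th letter maps (0-indexed here).\<close>
definition gen_substitution :: "'a::metric_space set \<Rightarrow> ('a \<Rightarrow> 'a list) \<Rightarrow> bool" where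
  "gen_substitution K \<sigma> \<longleftrightarrow>
     (\<forall>a\<in>K. \<sigma> a \<noteq> [] \<and> set (\<sigma> a) \<subseteq> K) \<and>
     continuous_on K (\<lambda>a. length (\<sigma> a)) \<and>
     (\<forall>j::nat. continuous_on {a\<in>K. j < length (\<sigma> a)} (\<lambda>a. \<sigma> a ! j))"

text \<open>Starting coordinate of the block sigma(x_k) in sigma(x); block sigma(x_0) starts at 0.\<close>
definition block_start :: "('a \<Rightarrow> 'a list) \<Rightarrow> (int \<Rightarrow> 'a) \<Rightarrow> int \<Rightarrow> int" where
  "block_start \<sigma> x k =
     (if 0 \<le> k then (\<Sum>i\<in>{0..<k}. int (length (\<sigma> (x i))))
      else - (\<Sum>i\<in>{k..<0}. int (length (\<sigma> (x i)))))"

definition subst_ext :: "('a \<Rightarrow> 'a list) \<Rightarrow> (int \<Rightarrow> 'a) \<Rightarrow> (int \<Rightarrow> 'a)" where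
  "subst_ext \<sigma> x n =
     (let k = (THE k. block_start \<sigma> x k \<le> n \<and> n < block_start \<sigma> x (k + 1))
      in \<sigma> (x k) ! nat (n - block_start \<sigma> x k))"

definition full_shift_top :: "'a::metric_space set \<Rightarrow> (int \<Rightarrow> 'a) topology" where
  "full_shift_top K = product_topology (\<lambda>_. top_of_set K) UNIV"

end

theory Submission
  imports Defs
begin

text \<open>Coordinate \<open>n\<close> of \<open>\<sigma>(x)\<close> is the \<open>j\<close>-th letter of the block \<open>\<sigma>(x\<^sub>k)\<close> containing \<open>n\<close>, and both
  \<open>k\<close> and \<open>j\<close> are determined by the lengths \<open>|\<sigma>(x\<^sub>i)|\<close> for \<open>i\<close> between \<open>0\<close> and \<open>k\<close>.
  Since the length map is continuous into a discrete space, these lengths are locally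
  constant in \<open>x\<close>, so near \<open>x\<close> coordinate \<open>n\<close> of \<open>\<sigma>(y)\<close> is \<open>\<sigma>(y\<^sub>k)\<^sub>j\<close>, which depends
  continuously on \<open>y\<^sub>k\<close>.\<close>

lemma block_start_Suc:
  "block_start \<sigma> x (k + 1) = block_start \<sigma> x k + int (length (\<sigma> (x k)))"
proof (cases "0 \<le> k")
  case True
  then have "{0..<k + 1} = insert k {0..<k}" by auto
  with True show ?thesis by (simp add: block_start_def)
next
  case False
  show ?thesis
  proof (cases "k = -1")
    case True
    then have "{k..<0} = {-1}" by auto
    with True show ?thesis by (simp add: block_start_def)
  next
    case k: False
    with False have "{k..<0} = insert k {k + 1..<0}" by auto
    with False k show ?thesis by (simp add: block_start_def)
  qed
qed

lemma block_start_zero [simp]: "block_start \<sigma> x 0 = 0"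
  by (simp add: block_start_def)

lemma block_start_mono:
  assumes nonempty: "\<And>i. \<sigma> (x i) \<noteq> []" and "a \<le> b"
  shows "block_start \<sigma> x a + (b - a) \<le> block_start \<sigma> x b"
proof -
  have "block_start \<sigma> x a + int d \<le> block_start \<sigma> x (a + int d)" for d
  proof (induction d)
    case (Suc d)
    have "length (\<sigma> (x (a + int d))) \<ge> 1"
      using nonempty by (simp add: Suc_le_eq)
    with Suc show ?case
      using block_start_Suc[of \<sigma> x "a + int d"] by (simp add: algebra_simps)
  qed simp
  from this[of "nat (b - a)"] \<open>a \<le> b\<close> show ?thesis by simp
qed

lemma block_containing_unique:
  assumes nonempty: "\<And>i. \<sigma> (x i) \<noteq> []"
    and "block_start \<sigma> x k \<le> n" "n < block_start \<sigma> x (k + 1)"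
    and "block_start \<sigma> x k' \<le> n" "n < block_start \<sigma> x (k' + 1)"
  shows "k = k'"
proof (rule ccontr)
  assume "k \<noteq> k'"
  then consider "k + 1 \<le> k'" | "k' + 1 \<le> k" by linarith
  then show False
    by cases (use block_start_mono[of \<sigma> x, OF nonempty] assms(2-) in fastforce)+
qed

lemma block_containing_exists:
  assumes nonempty: "\<And>i. \<sigma> (x i) \<noteq> []"
  shows "\<exists>k. block_start \<sigma> x k \<le> n \<and> n < block_start \<sigma> x (k + 1)"
proof -
  define S where "S = {k \<in> {min n 0..max n 0}. block_start \<sigma> x k \<le> n}"
  have "finite S" unfolding S_def by (rule finite_subset[of _ "{min n 0..max n 0}"]) auto
  have "min n 0 \<in> S"
    using block_start_mono[of \<sigma> x, OF nonempty, of "min n 0" 0] unfolding S_def by auto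
  define m where "m = Max S"
  have "m \<in> S" using \<open>finite S\<close> \<open>min n 0 \<in> S\<close> unfolding m_def by (auto intro: Max_in)
  moreover have "n < block_start \<sigma> x (m + 1)"
  proof (rule ccontr)
    assume le: "\<not> n < block_start \<sigma> x (m + 1)"
    show False
    proof (cases "m + 1 \<le> max n 0")
      case True
      with le \<open>m \<in> S\<close> have "m + 1 \<in> S" unfolding S_def by auto
      with \<open>finite S\<close> show False unfolding m_def using Max_ge by fastforce
    next
      case False
      then show False
        using le block_start_mono[of \<sigma> x, OF nonempty, of 0 "m + 1"] by simp
    qed
  qed
  ultimately show ?thesis unfolding S_def by auto
qed

lemma subst_ext_eq_block_letter:
  assumes nonempty: "\<And>i. \<sigma> (x i) \<noteq> []"
    and "block_start \<sigma> x k \<le> n" "n < block_start \<sigma> x (k + 1)"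
  shows "subst_ext \<sigma> x n = \<sigma> (x k) ! nat (n - block_start \<sigma> x k)"
proof -
  have "(THE k. block_start \<sigma> x k \<le> n \<and> n < block_start \<sigma> x (k + 1)) = k"
    using assms block_containing_unique[of \<sigma> x, OF nonempty] by (intro the_equality) auto
  then show ?thesis by (simp add: subst_ext_def)
qed

lemma block_start_cong:
  assumes "\<And>i. i \<in> {min 0 k..max 0 k} \<Longrightarrow> length (\<sigma> (y i)) = length (\<sigma> (x i))"
  shows "block_start \<sigma> y k = block_start \<sigma> x k"
  using assms by (auto simp: block_start_def intro!: sum.cong arg_cong[of _ _ uminus])

lemma subst_ext_eq_on_window:
  assumes nonempty: "\<And>i. \<sigma> (y i) \<noteq> []"
    and lengths: "\<And>i. i \<in> {min 0 k..max 0 k} \<Longrightarrow> length (\<sigma> (y i)) = length (\<sigma> (x i))"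
    and "block_start \<sigma> x k \<le> n" "n < block_start \<sigma> x (k + 1)"
  shows "subst_ext \<sigma> y n = \<sigma> (y k) ! nat (n - block_start \<sigma> x k)"
proof -
  have start: "block_start \<sigma> y k = block_start \<sigma> x k"
    using block_start_cong lengths by blast
  moreover have "block_start \<sigma> y (k + 1) = block_start \<sigma> x (k + 1)"
    using start lengths[of k] block_start_Suc[of \<sigma> _ k] by simp
  ultimately show ?thesis
    using subst_ext_eq_block_letter[of \<sigma> y k n, OF nonempty] assms(3,4) by simp
qed

lemma gen_substitution_openin_length_level:
  assumes "gen_substitution K \<sigma>"
  shows "openin (top_of_set K) {a \<in> K. length (\<sigma> a) = L}"
proof -
  have "continuous_on K (\<lambda>a. length (\<sigma> a))"
    using assms by (simp add: gen_substitution_def)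
  then have "openin (top_of_set K) (K \<inter> (\<lambda>a. length (\<sigma> a)) -` {L})"
    by (rule continuous_openin_preimage_gen) (simp add: open_discrete)
  then show ?thesis by (simp add: Int_def vimage_def)
qed

lemma gen_substitution_openin_letter_preimage:
  assumes sub: "gen_substitution K \<sigma>" and U: "openin (top_of_set K) U"
  shows "openin (top_of_set K) {a \<in> K. j < length (\<sigma> a) \<and> \<sigma> a ! j \<in> U}"
proof -
  define D where "D = {a \<in> K. j < length (\<sigma> a)}"
  have "continuous_on K (\<lambda>a. length (\<sigma> a))"
    using sub by (simp add: gen_substitution_def)
  then have "openin (top_of_set K) (K \<inter> (\<lambda>a. length (\<sigma> a)) -` {j<..})"
    by (rule continuous_openin_preimage_gen) simp
  then have D_open: "openin (top_of_set K) D"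
    unfolding D_def by (simp add: Int_def vimage_def)
  obtain T where T: "open T" "U = K \<inter> T" using U openin_open by blast
  have "continuous_on D (\<lambda>a. \<sigma> a ! j)"
    using sub unfolding D_def gen_substitution_def by blast
  then have "openin (top_of_set D) (D \<inter> (\<lambda>a. \<sigma> a ! j) -` T)"
    using \<open>open T\<close> by (rule continuous_openin_preimage_gen)
  then have "openin (top_of_set K) (D \<inter> (\<lambda>a. \<sigma> a ! j) -` T)"
    using D_open openin_trans by blast
  moreover have "\<sigma> a ! j \<in> K" if "a \<in> D" for a
    using sub that nth_mem unfolding D_def gen_substitution_def by blast
  then have "D \<inter> (\<lambda>a. \<sigma> a ! j) -` T = {a \<in> K. j < length (\<sigma> a) \<and> \<sigma> a ! j \<in> U}"
    using T(2) unfolding D_def by auto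
  ultimately show ?thesis by simp
qed

lemma topspace_full_shift_top: "topspace (full_shift_top K) = {x. \<forall>i. x i \<in> K}"
  by (auto simp: full_shift_top_def topspace_product_topology PiE_UNIV_domain)

lemma openin_full_shift_top_cylinder:
  assumes "openin (top_of_set K) V"
  shows "openin (full_shift_top K) {y \<in> topspace (full_shift_top K). y i \<in> V}"
  unfolding full_shift_top_def
  by (rule openin_continuous_map_preimage[OF continuous_map_product_projection[where k = i] assms]) simp

lemma subst_ext_locally_letter:
  assumes nonempty: "\<And>i. \<sigma> (x i) \<noteq> []"
  obtains k j where "j < length (\<sigma> (x k))"
    and "\<And>y. (\<And>i. \<sigma> (y i) \<noteq> []) \<Longrightarrow>
      (\<And>i. i \<in> {min 0 k..max 0 k} \<Longrightarrow> length (\<sigma> (y i)) = length (\<sigma> (x i))) \<Longrightarrow>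
      subst_ext \<sigma> y n = \<sigma> (y k) ! j"
proof -
  obtain k where k: "block_start \<sigma> x k \<le> n" "n < block_start \<sigma> x (k + 1)"
    using block_containing_exists[of \<sigma> x, OF nonempty] by blast
  then have "nat (n - block_start \<sigma> x k) < length (\<sigma> (x k))"
    using block_start_Suc[of \<sigma> x k] by simp
  with k show ?thesis
    using that subst_ext_eq_on_window by blast
qed

lemma continuous_map_subst_ext_coordinate:
  assumes sub: "gen_substitution K \<sigma>"
  shows "continuous_map (full_shift_top K) (top_of_set K) (\<lambda>x. subst_ext \<sigma> x n)"
proof -
  let ?X = "topspace (full_shift_top K)"
  have words: "\<sigma> a \<noteq> [] \<and> set (\<sigma> a) \<subseteq> K" if "a \<in> K" for a
    using sub that by (simp add: gen_substitution_def)
  have nonempty: "\<sigma> (x i) \<noteq> []" if "x \<in> ?X" for x i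
    using that words by (simp add: topspace_full_shift_top)
  show ?thesis
    unfolding continuous_map_def
  proof (intro conjI allI impI)
    show "(\<lambda>x. subst_ext \<sigma> x n) \<in> ?X \<rightarrow> topspace (top_of_set K)"
    proof
      fix x assume x: "x \<in> ?X"
      obtain k j where "j < length (\<sigma> (x k))" "subst_ext \<sigma> x n = \<sigma> (x k) ! j"
        using subst_ext_locally_letter[of \<sigma> x n] nonempty[OF x] by metis
      with x words show "subst_ext \<sigma> x n \<in> topspace (top_of_set K)"
        by (auto simp: topspace_full_shift_top dest!: nth_mem)
    qed
  next
    fix U assume U: "openin (top_of_set K) U"
    show "openin (full_shift_top K) {x \<in> ?X. subst_ext \<sigma> x n \<in> U}"
    proof (subst openin_subopen, intro ballI)
      fix x assume "x \<in> {x \<in> ?X. subst_ext \<sigma> x n \<in> U}"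
      then have x: "x \<in> ?X" and xU: "subst_ext \<sigma> x n \<in> U" by auto
      obtain k j where j: "j < length (\<sigma> (x k))" and letter: "\<And>y. y \<in> ?X \<Longrightarrow>
          (\<And>i. i \<in> {min 0 k..max 0 k} \<Longrightarrow> length (\<sigma> (y i)) = length (\<sigma> (x i))) \<Longrightarrow>
          subst_ext \<sigma> y n = \<sigma> (y k) ! j"
        using subst_ext_locally_letter[of \<sigma> x n] nonempty x by metis
      define W where "W = (\<Inter>i \<in> {min 0 k..max 0 k}.
          {y \<in> ?X. y i \<in> {a \<in> K. length (\<sigma> a) = length (\<sigma> (x i))}})
          \<inter> {y \<in> ?X. y k \<in> {a \<in> K. j < length (\<sigma> a) \<and> \<sigma> a ! j \<in> U}}"
      show "\<exists>W. openin (full_shift_top K) W \<and> x \<in> W \<and> W \<subseteq> {x \<in> ?X. subst_ext \<sigma> x n \<in> U}"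
      proof (intro exI conjI)
        show "openin (full_shift_top K) W"
          unfolding W_def
          by (intro openin_Int openin_INT2 openin_full_shift_top_cylinder
              gen_substitution_openin_length_level gen_substitution_openin_letter_preimage
              sub U) auto
        show "x \<in> W"
          using x xU j letter[OF x] unfolding W_def by (auto simp: topspace_full_shift_top)
        show "W \<subseteq> {x \<in> ?X. subst_ext \<sigma> x n \<in> U}"
          using letter unfolding W_def by auto
      qed
    qed
  qed
qed

theorem mainTheorem16:
  fixes K :: "'a::metric_space set" and \<sigma> :: "'a \<Rightarrow> 'a list"
  assumes "alphabet_space K"
    and "gen_substitution K \<sigma>"
  shows "continuous_map (full_shift_top K) (full_shift_top K) (subst_ext \<sigma>)"
  using continuous_map_subst_ext_coordinate[OF assms(2)]
  by (simp add: full_shift_top_def continuous_map_componentwise_UNIV)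

end
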